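(* $\mathbf{SC}(1,1)\subseteq\mathbf{SC}'(1,1)$.
   Context: For an alphabet $V$, $V^+=V^*-\{\lambda\}$, and $\mathit{alph}(w)$ is the set of symbols occurring in $w$. A semi-conditional grammar of degree $(1,1)$ is a quadruple $G=(N,T,P,S)$ where $N$ and $T$ are disjoint finite alphabets of nonterminals and terminals, $V=N\cup T$, $S\in N$, and $P$ is a finite set of productions $(A\to x,\mathit{Per},\mathit{For})$ with $A\in N$, $x\in V^+$ (no erasing productions), $\mathit{Per},\mathit{For}\subseteq V$, $|\mathit{Per}|\le1$, $|\mathit{For}|\le1$. Its language is $L(G)=\{w\in T^*:S\Rightarrow^*w\}$. $\mathbf{SC}(1,1)$ is the family of languages generated by such grammars when the derivation step $uAv\Rightarrow uxv$ ($u,v\in V^*$) by $(A\to x,\mathit{Per},\mathit{For})$ requires $\mathit{Per}\subseteq\mathit{alph}(uAv)$ and $\mathit{alph}(uAv)\cap\mathit{For}=\emptyset$. $\mathbf{SC}'(1,1)$ is the family of languages generated by such grammars when the derivation step instead requires $\mathit{Per}\subseteq\mathit{alph}(uv)$ and $\mathit{alph}(uv)\cap\mathit{For}=\emptyset$ (the rewritten occurrence of $A$ is not taken into account). *)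

theory Defs
  imports Main
begin

text \<open>A production (A -> x, Per, For) is a tuple (A, x, Per, For).
  A grammar is a tuple (N, T, P, S).\<close>

type_synonym 'a prod = "'a \<times> 'a list \<times> 'a set \<times> 'a set"
type_synonym 'a grammar = "'a set \<times> 'a set \<times> 'a prod set \<times> 'a"

definition nonterms :: "'a grammar \<Rightarrow> 'a set" where "nonterms G = fst G"
definition terms :: "'a grammar \<Rightarrow> 'a set" where "terms G = fst (snd G)"
definition prods :: "'a grammar \<Rightarrow> 'a prod set" where "prods G = fst (snd (snd G))"
definition start :: "'a grammar \<Rightarrow> 'a" where "start G = snd (snd (snd G))"

definition sc11_grammar :: "'a grammar \<Rightarrow> bool" where
  "sc11_grammar G \<longleftrightarrow>
     finite (nonterms G) \<and> finite (terms G) \<and> nonterms G \<inter> terms G = {} \<and>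
     start G \<in> nonterms G \<and> finite (prods G) \<and>
     (\<forall>(A, x, Per, For) \<in> prods G.
        A \<in> nonterms G \<and> x \<noteq> [] \<and> set x \<subseteq> nonterms G \<union> terms G \<and>
        Per \<subseteq> nonterms G \<union> terms G \<and> For \<subseteq> nonterms G \<union> terms G \<and>
        card Per \<le> 1 \<and> card For \<le> 1)"

definition sc_step :: "'a grammar \<Rightarrow> 'a list \<Rightarrow> 'a list \<Rightarrow> bool" where
  "sc_step G w w' \<longleftrightarrow> (\<exists>A x Per For u v. (A, x, Per, For) \<in> prods G \<and>
     w = u @ [A] @ v \<and> w' = u @ x @ v \<and>
     Per \<subseteq> set (u @ [A] @ v) \<and> set (u @ [A] @ v) \<inter> For = {})"

definition sc'_step :: "'a grammar \<Rightarrow> 'a list \<Rightarrow> 'a list \<Rightarrow> bool" where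
  "sc'_step G w w' \<longleftrightarrow> (\<exists>A x Per For u v. (A, x, Per, For) \<in> prods G \<and>
     w = u @ [A] @ v \<and> w' = u @ x @ v \<and>
     Per \<subseteq> set (u @ v) \<and> set (u @ v) \<inter> For = {})"

definition lang_sc :: "'a grammar \<Rightarrow> 'a list set" where
  "lang_sc G = {w. set w \<subseteq> terms G \<and> (sc_step G)\<^sup>*\<^sup>* [start G] w}"

definition lang_sc' :: "'a grammar \<Rightarrow> 'a list set" where
  "lang_sc' G = {w. set w \<subseteq> terms G \<and> (sc'_step G)\<^sup>*\<^sup>* [start G] w}"

definition SC11 :: "'a list set set" where
  "SC11 = {L. \<exists>G. sc11_grammar G \<and> L = lang_sc G}"

definition SC'11 :: "'a list set set" where
  "SC'11 = {L. \<exists>G. sc11_grammar G \<and> L = lang_sc' G}"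

end

theory Submission
  imports Defs
begin

(* Under SC semantics the rewritten occurrence of A is always
   present in the sentential form u A v.  Hence a production (A -> x, Per, For)
   with A in For can never be applied, and a permitting symbol equal to A is
   always satisfied.  Outside of A itself, alph(uAv) and alph(uv) agree.
   So deleting the productions with A in For and replacing Per by Per - {A}
   yields a grammar whose SC' steps are exactly the SC steps of the original
   one (lemma sc'_step_sc'_grammar).  The transformation keeps all the
   restrictions of degree (1,1) (lemma sc11_grammar_sc'_grammar), and equal
   step relations give equal languages, which proves SC(1,1) <= SC'(1,1).
   The construction needs no fresh symbols. *)

definition sc'_prods :: "'a prod set \<Rightarrow> 'a prod set" where
  "sc'_prods P = {(A, x, Per - {A}, For) | A x Per For. (A, x, Per, For) \<in> P \<and> A \<notin> For}"

definition sc'_grammar :: "'a grammar \<Rightarrow> 'a grammar" where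
  "sc'_grammar G = (nonterms G, terms G, sc'_prods (prods G), start G)"

lemma sc'_grammar_simps [simp]:
  "nonterms (sc'_grammar G) = nonterms G"
  "terms (sc'_grammar G) = terms G"
  "prods (sc'_grammar G) = sc'_prods (prods G)"
  "start (sc'_grammar G) = start G"
  by (simp_all add: sc'_grammar_def nonterms_def terms_def prods_def start_def)

lemma sc_conditions_iff_sc'_conditions:
  "(Per \<subseteq> set (u @ [A] @ v) \<and> set (u @ [A] @ v) \<inter> For = {}) \<longleftrightarrow>
   (A \<notin> For \<and> Per - {A} \<subseteq> set (u @ v) \<and> set (u @ v) \<inter> For = {})"
  by auto

text \<open>The modification preserves being a semi-conditional grammar of degree (1,1):
  removing a symbol from a permitting set does not increase its size, and the
  new production set is an image of the old one, hence finite.\<close>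
lemma sc11_grammar_sc'_grammar:
  assumes G: "sc11_grammar G"
  shows "sc11_grammar (sc'_grammar G)"
proof -
  have "finite (sc'_prods (prods G))"
  proof -
    have "sc'_prods (prods G) \<subseteq> (\<lambda>(A, x, Per, For). (A, x, Per - {A}, For)) ` prods G"
      unfolding sc'_prods_def by (auto intro: rev_image_eqI)
    then show ?thesis
      using G finite_surj by (auto simp: sc11_grammar_def)
  qed
  moreover have "A \<in> nonterms G \<and> x \<noteq> [] \<and> set x \<subseteq> nonterms G \<union> terms G \<and>
      Per' \<subseteq> nonterms G \<union> terms G \<and> For \<subseteq> nonterms G \<union> terms G \<and>
      card Per' \<le> 1 \<and> card For \<le> 1"
    if new: "(A, x, Per', For) \<in> sc'_prods (prods G)" for A x Per' For
  proof -
    obtain Per where p: "(A, x, Per, For) \<in> prods G" and Per': "Per' = Per - {A}"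
      using new unfolding sc'_prods_def by blast
    have "A \<in> nonterms G \<and> x \<noteq> [] \<and> set x \<subseteq> nonterms G \<union> terms G \<and>
        Per \<subseteq> nonterms G \<union> terms G \<and> For \<subseteq> nonterms G \<union> terms G \<and>
        card Per \<le> 1 \<and> card For \<le> 1"
      using G p unfolding sc11_grammar_def by fast
    moreover have "card Per' \<le> card Per"
      unfolding Per' by (rule card_Diff1_le)
    ultimately show ?thesis
      unfolding Per' by auto
  qed
  ultimately show ?thesis
    using G unfolding sc11_grammar_def sc'_grammar_simps by blast
qed

lemma sc'_step_sc'_grammar: "sc'_step (sc'_grammar G) = sc_step G"
proof (intro ext)
  fix w w'
  have "sc'_step (sc'_grammar G) w w' \<longleftrightarrow>
        (\<exists>A x Per For u v. (A, x, Per, For) \<in> prods G \<and> A \<notin> For \<and>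
           w = u @ [A] @ v \<and> w' = u @ x @ v \<and>
           Per - {A} \<subseteq> set (u @ v) \<and> set (u @ v) \<inter> For = {})"
    unfolding sc'_step_def sc'_grammar_simps sc'_prods_def by blast
  also have "\<dots> \<longleftrightarrow> sc_step G w w'"
    unfolding sc_step_def sc_conditions_iff_sc'_conditions by blast
  finally show "sc'_step (sc'_grammar G) w w' = sc_step G w w'" .
qed

lemma lang_sc'_sc'_grammar: "lang_sc' (sc'_grammar G) = lang_sc G"
  by (simp add: lang_sc'_def lang_sc_def sc'_step_sc'_grammar)

theorem corollary2:
  assumes "infinite (UNIV :: 'a set)"
  shows "(SC11 :: 'a list set set) \<subseteq> SC'11"
proof
  fix L :: "'a list set"
  assume "L \<in> SC11"
  then obtain G where "sc11_grammar G" and "L = lang_sc G"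
    by (auto simp: SC11_def)
  then have "sc11_grammar (sc'_grammar G)" and "L = lang_sc' (sc'_grammar G)"
    by (simp_all add: sc11_grammar_sc'_grammar lang_sc'_sc'_grammar)
  then show "L \<in> SC'11"
    unfolding SC'11_def by blast
qed

end
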